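(* Suppose $S\subseteq\{0,1\}^n$ and $f_t(\boldsymbol{x},\boldsymbol{\xi})=(\boldsymbol{A}^t\boldsymbol{x}+\boldsymbol{a}^t)^{\top}\boldsymbol{\xi}+(\boldsymbol{b}^t)^{\top}\boldsymbol{x}+h^t$ for all $t\in[T]$ (with $\boldsymbol{A}^t\in\mathbb{R}^{m\times n}$, $\boldsymbol{a}^t\in\mathbb{R}^m$, $\boldsymbol{b}^t\in\mathbb{R}^n$, $h^t\in\mathbb{R}$). Let $Z_{C_2}$ be the set of $\boldsymbol{x}\in\mathbb{R}^n$ for which there exist $\lambda\ge0$, $\alpha_t\ge0$, $s_i\ge0$, $\boldsymbol{z}_{it}\in\mathbb{R}^m$ satisfying the system ( * ): $\lambda\delta+\frac1N\sum_{i=1}^Ns_i\le\epsilon$; $G_{f_t}(\boldsymbol{z}_{it},\alpha_t,\boldsymbol{x})+1-\boldsymbol{z}_{it}^{\top}\boldsymbol{\zeta}^i-s_i\le0$ and $\|\boldsymbol{z}_{it}\|_*\le\lambda$ for all $i\in[N],t\in[T]$, where $G_{f_t}(\boldsymbol{z},\alpha,\boldsymbol{x})=\sup_{\boldsymbol{\xi}\in\Xi}[\boldsymbol{z}^{\top}\boldsymbol{\xi}-\alpha f_t(\boldsymbol{x},\boldsymbol{\xi})]$. Assume there is a vector $\boldsymbol{M}$ such that $\alpha_t\le M_t$ for all $t$ whenever $(\lambda,\boldsymbol{s},\boldsymbol{z},\boldsymbol{\alpha},\boldsymbol{x})$ satisfies ( * ) with $\boldsymbol{x}\in S$. Define $\hat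 f_t((\alpha_t,\boldsymbol{y}^t),\boldsymbol{\xi})=(\boldsymbol{A}^t\boldsymbol{y}^t+\boldsymbol{a}^t\alpha_t)^{\top}\boldsymbol{\xi}+(\boldsymbol{b}^t)^{\top}\boldsymbol{y}^t+h^t\alpha_t$ and let $\hat Z_{C_2}$ be the set of $\boldsymbol{x}\in\mathbb{R}^n$ for which there exist $\lambda\ge0$, $\alpha_t\ge0$, $s_i\ge0$, $\boldsymbol{z}_{it}\in\mathbb{R}^m$, $\boldsymbol{y}^t\in\mathbb{R}^n$ with $\lambda\delta+\frac1N\sum_{i=1}^Ns_i\le\epsilon$; $\sup_{\boldsymbol{\xi}\in\Xi}[\boldsymbol{z}_{it}^{\top}\boldsymbol{\xi}-\hat f_t((\alpha_t,\boldsymbol{y}^t),\boldsymbol{\xi})]+1-\boldsymbol{z}_{it}^{\top}\boldsymbol{\zeta}^i-s_i\le0$ for all $i\in[N],t\in[T]$; $0\le y^t_r\le M_tx_r$ and $\alpha_t-M_t(1-x_r)\le y^t_r\le\alpha_t$ for all $r\in[n],t\in[T]$; $\|\boldsymbol{z}_{it}\|_*\le\lambda$ for all $i\in[N],t\in[T]$. Then $\hat Z_{C_2}$ is convex and $S\cap\hat Z_{C_2}=S\cap Z_{C_2}\subseteq S\cap Z_D$, where $Z_D=\{\boldsymbol{x}\in\mathbb{R}^n:\inf_{\mathbb{P}\in\mathcal{P}_W}\mathbb{P}\{\boldsymbol{\xi}:f_t(\boldsymbol{x},\boldsymbol{\xi})\ge0\ \forall t\in[T]\}\ge1-\epsilo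n\}$.
   Context: Setting: $\epsilon\in(0,1)$, $\delta>0$, $[T]=\{1,\dots,T\}$; $\Xi\subseteq\mathbb{R}^m$ is a nonempty closed convex set; $\|\cdot\|$ is a norm on $\mathbb{R}^m$ with dual norm $\|\cdot\|_*$; $\boldsymbol{\zeta}^1,\dots,\boldsymbol{\zeta}^N\in\Xi$ are given samples with empirical distribution $\mathbb{P}_{\tilde\zeta}$ (mass $1/N$ each); $\mathcal{P}_W=\{\mathbb{P}:\mathbb{P}\{\boldsymbol{\xi}\in\Xi\}=1,\ W(\mathbb{P},\mathbb{P}_{\tilde\zeta})\le\delta\}$ with $W$ the 1-Wasserstein distance with transport cost $\|\boldsymbol{\xi}_1-\boldsymbol{\xi}_2\|$. *)

theory Defs
  imports "HOL-Analysis.Analysis" "HOL-Probability.Probability"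
begin

definition is_norm :: "(('a::real_vector) \<Rightarrow> real) \<Rightarrow> bool" where
  "is_norm nrm \<longleftrightarrow>
     (\<forall>x. nrm x \<ge> 0) \<and> (\<forall>x. nrm x = 0 \<longleftrightarrow> x = 0) \<and>
     (\<forall>c x. nrm (c *\<^sub>R x) = \<bar>c\<bar> * nrm x) \<and>
     (\<forall>x y. nrm (x + y) \<le> nrm x + nrm y)"

definition dual_norm :: "(('a::real_inner) \<Rightarrow> real) \<Rightarrow> 'a \<Rightarrow> real" where
  "dual_norm nrm z = Sup {z \<bullet> x | x. nrm x \<le> 1}"

definition fval ::
  "(nat \<Rightarrow> real^'n^'m) \<Rightarrow> (nat \<Rightarrow> real^'m) \<Rightarrow> (nat \<Rightarrow> real^'n) \<Rightarrow> (nat \<Rightarrow> real)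
   \<Rightarrow> nat \<Rightarrow> real^'n \<Rightarrow> real^'m \<Rightarrow> real" where
  "fval A a b h t x \<xi> = (A t *v x + a t) \<bullet> \<xi> + b t \<bullet> x + h t"

definition fhat ::
  "(nat \<Rightarrow> real^'n^'m) \<Rightarrow> (nat \<Rightarrow> real^'m) \<Rightarrow> (nat \<Rightarrow> real^'n) \<Rightarrow> (nat \<Rightarrow> real)
   \<Rightarrow> nat \<Rightarrow> real \<Rightarrow> real^'n \<Rightarrow> real^'m \<Rightarrow> real" where
  "fhat A a b h t \<alpha> y \<xi> = (A t *v y + \<alpha> *\<^sub>R a t) \<bullet> \<xi> + b t \<bullet> y + h t * \<alpha>"

definition Gf ::
  "(real^'m) set \<Rightarrow> (nat \<Rightarrow> real^'n^'m) \<Rightarrow> (nat \<Rightarrow> real^'m) \<Rightarrow> (nat \<Rightarrow> real^'n) \<Rightarrow> (nat \<Rightarrow> real)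
   \<Rightarrow> nat \<Rightarrow> real^'m \<Rightarrow> real \<Rightarrow> real^'n \<Rightarrow> ereal" where
  "Gf \<Xi> A a b h t z \<alpha> x = (SUP \<xi>\<in>\<Xi>. ereal (z \<bullet> \<xi> - \<alpha> * fval A a b h t x \<xi>))"

definition sysC2 ::
  "(real^'m \<Rightarrow> real) \<Rightarrow> (real^'m) set \<Rightarrow> real \<Rightarrow> real \<Rightarrow> nat \<Rightarrow> (nat \<Rightarrow> real^'m) \<Rightarrow> nat
   \<Rightarrow> (nat \<Rightarrow> real^'n^'m) \<Rightarrow> (nat \<Rightarrow> real^'m) \<Rightarrow> (nat \<Rightarrow> real^'n) \<Rightarrow> (nat \<Rightarrow> real)
   \<Rightarrow> real \<Rightarrow> (nat \<Rightarrow> real) \<Rightarrow> (nat \<Rightarrow> nat \<Rightarrow> real^'m) \<Rightarrow> (nat \<Rightarrow> real) \<Rightarrow> real^'n \<Rightarrow> bool" where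
  "sysC2 nrm \<Xi> \<epsilon> \<delta> N \<zeta> T A a b h lam s z \<alpha> x \<longleftrightarrow>
     lam \<ge> 0 \<and> (\<forall>t\<in>{1..T}. \<alpha> t \<ge> 0) \<and> (\<forall>i\<in>{1..N}. s i \<ge> 0) \<and>
     lam * \<delta> + (1 / real N) * (\<Sum>i=1..N. s i) \<le> \<epsilon> \<and>
     (\<forall>i\<in>{1..N}. \<forall>t\<in>{1..T}.
        Gf \<Xi> A a b h t (z i t) (\<alpha> t) x + ereal (1 - z i t \<bullet> \<zeta> i - s i) \<le> 0 \<and>
        dual_norm nrm (z i t) \<le> lam)"

definition ZC2 ::
  "(real^'m \<Rightarrow> real) \<Rightarrow> (real^'m) set \<Rightarrow> real \<Rightarrow> real \<Rightarrow> nat \<Rightarrow> (nat \<Rightarrow> real^'m) \<Rightarrow> nat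
   \<Rightarrow> (nat \<Rightarrow> real^'n^'m) \<Rightarrow> (nat \<Rightarrow> real^'m) \<Rightarrow> (nat \<Rightarrow> real^'n) \<Rightarrow> (nat \<Rightarrow> real)
   \<Rightarrow> (real^'n) set" where
  "ZC2 nrm \<Xi> \<epsilon> \<delta> N \<zeta> T A a b h =
     {x. \<exists>lam s z \<alpha>. sysC2 nrm \<Xi> \<epsilon> \<delta> N \<zeta> T A a b h lam s z \<alpha> x}"

definition ZC2hat ::
  "(real^'m \<Rightarrow> real) \<Rightarrow> (real^'m) set \<Rightarrow> real \<Rightarrow> real \<Rightarrow> nat \<Rightarrow> (nat \<Rightarrow> real^'m) \<Rightarrow> nat
   \<Rightarrow> (nat \<Rightarrow> real^'n^'m) \<Rightarrow> (nat \<Rightarrow> real^'m) \<Rightarrow> (nat \<Rightarrow> real^'n) \<Rightarrow> (nat \<Rightarrow> real)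
   \<Rightarrow> (nat \<Rightarrow> real) \<Rightarrow> (real^'n) set" where
  "ZC2hat nrm \<Xi> \<epsilon> \<delta> N \<zeta> T A a b h M =
     {x. \<exists>(lam::real) (s::nat \<Rightarrow> real) (z::nat \<Rightarrow> nat \<Rightarrow> real^'m) (\<alpha>::nat \<Rightarrow> real) (y::nat \<Rightarrow> real^'n).
        lam \<ge> 0 \<and> (\<forall>t\<in>{1..T}. \<alpha> t \<ge> 0) \<and> (\<forall>i\<in>{1..N}. s i \<ge> 0) \<and>
        lam * \<delta> + (1 / real N) * (\<Sum>i=1..N. s i) \<le> \<epsilon> \<and>
        (\<forall>i\<in>{1..N}. \<forall>t\<in>{1..T}.
           (SUP \<xi>\<in>\<Xi>. ereal (z i t \<bullet> \<xi> - fhat A a b h t (\<alpha> t) (y t) \<xi>))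
             + ereal (1 - z i t \<bullet> \<zeta> i - s i) \<le> 0) \<and>
        (\<forall>r. \<forall>t\<in>{1..T}. 0 \<le> y t $ r \<and> y t $ r \<le> M t * x $ r \<and>
                         \<alpha> t - M t * (1 - x $ r) \<le> y t $ r \<and> y t $ r \<le> \<alpha> t) \<and>
        (\<forall>i\<in>{1..N}. \<forall>t\<in>{1..T}. dual_norm nrm (z i t) \<le> lam)}"

definition coupling :: "('a::euclidean_space \<times> 'a) measure \<Rightarrow> 'a measure \<Rightarrow> 'a measure \<Rightarrow> bool" where
  "coupling \<pi> P Q \<longleftrightarrow> prob_space \<pi> \<and> sets \<pi> = sets borel \<and>
     distr \<pi> borel fst = P \<and> distr \<pi> borel snd = Q"

definition wasserstein :: "('a::euclidean_space \<Rightarrow> real) \<Rightarrow> 'a measure \<Rightarrow> 'a measure \<Rightarrow> ennreal" where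
  "wasserstein nrm P Q = (INF \<pi>\<in>{\<pi>. coupling \<pi> P Q}. \<integral>\<^sup>+ p. ennreal (nrm (fst p - snd p)) \<partial>\<pi>)"

definition empirical :: "nat \<Rightarrow> (nat \<Rightarrow> 'a::euclidean_space) \<Rightarrow> 'a measure" where
  "empirical N \<zeta> = distr (measure_pmf (pmf_of_set {1..N})) borel \<zeta>"

definition PW :: "('a::euclidean_space \<Rightarrow> real) \<Rightarrow> 'a set \<Rightarrow> real \<Rightarrow> nat \<Rightarrow> (nat \<Rightarrow> 'a) \<Rightarrow> 'a measure set" where
  "PW nrm \<Xi> \<delta> N \<zeta> = {P. prob_space P \<and> sets P = sets borel \<and> measure P \<Xi> = 1 \<and>
                        wasserstein nrm P (empirical N \<zeta>) \<le> ennreal \<delta>}"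

definition ZD ::
  "(real^'m \<Rightarrow> real) \<Rightarrow> (real^'m) set \<Rightarrow> real \<Rightarrow> real \<Rightarrow> nat \<Rightarrow> (nat \<Rightarrow> real^'m) \<Rightarrow> nat
   \<Rightarrow> (nat \<Rightarrow> real^'n^'m) \<Rightarrow> (nat \<Rightarrow> real^'m) \<Rightarrow> (nat \<Rightarrow> real^'n) \<Rightarrow> (nat \<Rightarrow> real)
   \<Rightarrow> (real^'n) set" where
  "ZD nrm \<Xi> \<epsilon> \<delta> N \<zeta> T A a b h =
     {x. (INF P\<in>PW nrm \<Xi> \<delta> N \<zeta>. ereal (measure P {\<xi>. \<forall>t\<in>{1..T}. fval A a b h t x \<xi> \<ge> 0}))
           \<ge> ereal (1 - \<epsilon>)}"

end

theory Submission
  imports Defs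
begin

text \<open>
  Replacing the bilinear term \<open>\<alpha>\<^sub>t x\<close> by \<open>y\<^sup>t\<close> makes every constraint of the lifted system
  jointly affine in the multipliers, \<open>y\<close> and \<open>x\<close>, apart from the convex dual-norm bounds; so
  the lifted set is the projection of a convex set. For binary \<open>x\<close> the big-M constraints force
  \<open>y\<^sup>t = \<alpha>\<^sub>t x\<close> and admit it because \<open>\<alpha>\<^sub>t \<le> M\<^sub>t\<close>, and \<open>f\<^sub>t((\<alpha>, \<alpha> x), \<xi>) = \<alpha> f\<^sub>t(x, \<xi>)\<close>.

  A solution of (*) gives \<open>1[\<xi> unsafe] \<le> s\<^sub>j + \<lambda> \<parallel>\<xi> - \<zeta>\<^sup>j\<parallel>\<close> for \<open>\<xi> \<in> \<Xi>\<close> and every sample \<open>j\<close>: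
  at an unsafe \<open>\<xi>\<close> some \<open>\<alpha>\<^sub>t f\<^sub>t(x, \<xi>) \<le> 0\<close>, and \<open>z\<^sub>j\<^sub>t\<^sup>T (\<zeta>\<^sup>j - \<xi>) \<le> \<lambda> \<parallel>\<xi> - \<zeta>\<^sup>j\<parallel>\<close>.
  Integrating against a coupling of \<open>P \<in> P\<^sub>W\<close> with the empirical distribution bounds
  \<open>P(unsafe)\<close> by \<open>(1/N) \<Sum> s\<^sub>i\<close> plus \<open>\<lambda>\<close> times the transport cost, whose infimum is at most
  \<open>\<delta>\<close>; hence \<open>P(unsafe) \<le> \<epsilon>\<close>.
\<close>

section \<open>Norms and dual norms\<close>

lemma is_norm_zero: "is_norm nrm \<Longrightarrow> nrm 0 = 0"
  unfolding is_norm_def by blast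

lemma is_norm_nonneg: "is_norm nrm \<Longrightarrow> 0 \<le> nrm x"
  unfolding is_norm_def by blast

lemma is_norm_pos: "is_norm nrm \<Longrightarrow> x \<noteq> 0 \<Longrightarrow> 0 < nrm x"
  unfolding is_norm_def by (metis order_le_less)

lemma is_norm_minus_commute: "is_norm nrm \<Longrightarrow> nrm (x - y) = nrm (y - x)"
  unfolding is_norm_def by (metis abs_minus_cancel abs_one minus_diff_eq mult_1 scaleR_minus1_left)

lemma is_norm_convex_on:
  assumes nrm: "is_norm nrm"
  shows "convex_on UNIV nrm"
proof (rule convex_onI)
  fix t :: real and x y assume t: "0 < t" "t < 1"
  have "nrm ((1 - t) *\<^sub>R x + t *\<^sub>R y) \<le> nrm ((1 - t) *\<^sub>R x) + nrm (t *\<^sub>R y)"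
    using nrm unfolding is_norm_def by blast
  also have "\<dots> = (1 - t) * nrm x + t * nrm y"
    using nrm t unfolding is_norm_def by simp
  finally show "nrm ((1 - t) *\<^sub>R x + t *\<^sub>R y) \<le> (1 - t) * nrm x + t * nrm y" .
qed simp

lemma is_norm_continuous_on:
  fixes nrm :: "'a::euclidean_space \<Rightarrow> real"
  shows "is_norm nrm \<Longrightarrow> continuous_on UNIV nrm"
  by (rule convex_on_continuous) (auto intro: is_norm_convex_on)

lemma is_norm_ge_norm:
  fixes nrm :: "'a::euclidean_space \<Rightarrow> real"
  assumes nrm: "is_norm nrm"
  obtains c where "0 < c" "\<And>x. c * norm x \<le> nrm x"
proof -
  have "sphere (0::'a) 1 \<noteq> {}" by simp
  then obtain x0 where x0: "x0 \<in> sphere 0 1" and min: "\<And>y. y \<in> sphere 0 1 \<Longrightarrow> nrm x0 \<le> nrm y"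
    using continuous_attains_inf[OF compact_sphere _ continuous_on_subset[OF is_norm_continuous_on[OF nrm]]]
    by blast
  have "nrm x0 * norm x \<le> nrm x" for x
  proof (cases "x = 0")
    case False
    have "nrm x0 \<le> nrm ((1 / norm x) *\<^sub>R x)" using min False by simp
    also have "\<dots> = nrm x / norm x" using nrm unfolding is_norm_def by simp
    finally show ?thesis using False by (simp add: field_simps)
  qed (simp add: is_norm_zero[OF nrm])
  moreover have "0 < nrm x0" using x0 by (intro is_norm_pos[OF nrm]) auto
  ultimately show thesis by (rule that[rotated])
qed

lemma bdd_above_dual_norm_set:
  fixes nrm :: "'a::euclidean_space \<Rightarrow> real"
  assumes nrm: "is_norm nrm"
  shows "bdd_above {z \<bullet> x | x. nrm x \<le> 1}"
proof -
  obtain c where c: "0 < c" "\<And>x. c * norm x \<le> nrm x"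
    using is_norm_ge_norm[OF nrm] by blast
  have "z \<bullet> x \<le> norm z / c" if "nrm x \<le> 1" for x
  proof -
    have "z \<bullet> x \<le> norm z * norm x" by (rule norm_cauchy_schwarz)
    also have "\<dots> \<le> norm z * (1 / c)"
      using c that by (intro mult_left_mono) (auto simp: field_simps intro: order_trans)
    finally show ?thesis by simp
  qed
  then show ?thesis by (intro bdd_aboveI[where M = "norm z / c"]) auto
qed

lemma dual_norm_le_iff:
  fixes nrm :: "'a::euclidean_space \<Rightarrow> real"
  assumes nrm: "is_norm nrm"
  shows "dual_norm nrm z \<le> L \<longleftrightarrow> (\<forall>x. nrm x \<le> 1 \<longrightarrow> z \<bullet> x \<le> L)"
proof -
  have "z \<bullet> 0 \<in> {z \<bullet> x | x. nrm x \<le> 1}" using is_norm_zero[OF nrm] by (intro CollectI exI[where x=0]) simp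
  then have "{z \<bullet> x | x. nrm x \<le> 1} \<noteq> {}" by blast
  then show ?thesis
    unfolding dual_norm_def using cSup_le_iff[OF _ bdd_above_dual_norm_set[OF nrm]] by blast
qed

lemma inner_le_dual_norm_mult:
  fixes nrm :: "'a::euclidean_space \<Rightarrow> real"
  assumes nrm: "is_norm nrm" and z: "dual_norm nrm z \<le> L"
  shows "z \<bullet> v \<le> L * nrm v"
proof (cases "v = 0")
  case False
  then have pos: "0 < nrm v" by (rule is_norm_pos[OF nrm])
  have "nrm ((1 / nrm v) *\<^sub>R v) \<le> 1" using nrm pos unfolding is_norm_def by simp
  then have "z \<bullet> ((1 / nrm v) *\<^sub>R v) \<le> L" using z dual_norm_le_iff[OF nrm] by blast
  then show ?thesis using pos by (simp add: field_simps)
qed (simp add: is_norm_zero[OF nrm])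

lemma dual_norm_convex_combination_le:
  fixes nrm :: "'a::euclidean_space \<Rightarrow> real"
  assumes nrm: "is_norm nrm" and "dual_norm nrm z1 \<le> l1" "dual_norm nrm z2 \<le> l2"
    and u: "0 \<le> u" and v: "0 \<le> v"
  shows "dual_norm nrm (u *\<^sub>R z1 + v *\<^sub>R z2) \<le> u * l1 + v * l2"
  unfolding dual_norm_le_iff[OF nrm]
proof (intro allI impI)
  fix x assume "nrm x \<le> 1"
  then have "u * (z1 \<bullet> x) + v * (z2 \<bullet> x) \<le> u * l1 + v * l2"
    using assms dual_norm_le_iff[OF nrm] by (intro add_mono mult_left_mono) auto
  then show "(u *\<^sub>R z1 + v *\<^sub>R z2) \<bullet> x \<le> u * l1 + v * l2" by (simp add: inner_add_left)
qed

section \<open>The lifted system and its big-M linearisation\<close>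

lemma SUP_ereal_add_le_0_iff:
  "(SUP \<xi>\<in>X. ereal (F \<xi>)) + ereal c \<le> 0 \<longleftrightarrow> (\<forall>\<xi>\<in>X. F \<xi> + c \<le> 0)"
proof -
  have "(SUP \<xi>\<in>X. ereal (F \<xi>)) + ereal c \<le> 0 \<longleftrightarrow> (SUP \<xi>\<in>X. ereal (F \<xi>)) \<le> ereal (- c)"
    by (cases "SUP \<xi>\<in>X. ereal (F \<xi>)") auto
  also have "\<dots> \<longleftrightarrow> (\<forall>\<xi>\<in>X. F \<xi> + c \<le> 0)" by (auto simp: SUP_le_iff)
  finally show ?thesis .
qed

lemma fhat_scaleR: "fhat A a b h t \<alpha> (\<alpha> *\<^sub>R x) \<xi> = \<alpha> * fval A a b h t x \<xi>"
  unfolding fhat_def fval_def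
  by (simp add: algebra_simps matrix_vector_mult_scaleR inner_add_left)

lemma fhat_convex_combination:
  "fhat A a b h t (u * \<alpha>1 + v * \<alpha>2) (u *\<^sub>R y1 + v *\<^sub>R y2) \<xi>
     = u * fhat A a b h t \<alpha>1 y1 \<xi> + v * fhat A a b h t \<alpha>2 y2 \<xi>"
  unfolding fhat_def
  by (simp add: algebra_simps matrix_vector_mult_scaleR matrix_vector_right_distrib inner_add_left)

lemma sysC2_iff:
  "sysC2 nrm \<Xi> \<epsilon> \<delta> N \<zeta> T A a b h lam s z \<alpha> x \<longleftrightarrow>
     lam \<ge> 0 \<and> (\<forall>t\<in>{1..T}. \<alpha> t \<ge> 0) \<and> (\<forall>i\<in>{1..N}. s i \<ge> 0) \<and>
     lam * \<delta> + (1 / real N) * (\<Sum>i=1..N. s i) \<le> \<epsilon> \<and>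
     (\<forall>i\<in>{1..N}. \<forall>t\<in>{1..T}.
        (\<forall>\<xi>\<in>\<Xi>. z i t \<bullet> \<xi> - \<alpha> t * fval A a b h t x \<xi> + (1 - z i t \<bullet> \<zeta> i - s i) \<le> 0) \<and>
        dual_norm nrm (z i t) \<le> lam)"
  unfolding sysC2_def Gf_def SUP_ereal_add_le_0_iff by blast

definition big_M_box :: "real \<Rightarrow> real \<Rightarrow> real \<Rightarrow> real \<Rightarrow> bool" where
  "big_M_box m \<alpha> x y \<longleftrightarrow> 0 \<le> y \<and> y \<le> m * x \<and> \<alpha> - m * (1 - x) \<le> y \<and> y \<le> \<alpha>"

lemma big_M_box_binary_eq: "x = 0 \<or> x = 1 \<Longrightarrow> big_M_box m \<alpha> x y \<Longrightarrow> y = \<alpha> * x"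
  unfolding big_M_box_def by auto

lemma big_M_box_binaryI: "x = 0 \<or> x = 1 \<Longrightarrow> 0 \<le> \<alpha> \<Longrightarrow> \<alpha> \<le> m \<Longrightarrow> big_M_box m \<alpha> x (\<alpha> * x)"
  unfolding big_M_box_def by auto

lemma big_M_box_convex_combination:
  assumes box1: "big_M_box m \<alpha>1 x1 y1" and box2: "big_M_box m \<alpha>2 x2 y2"
    and u: "0 \<le> u" and v: "0 \<le> v" and uv: "u + v = 1"
  shows "big_M_box m (u * \<alpha>1 + v * \<alpha>2) (u * x1 + v * x2) (u * y1 + v * y2)"
proof -
  have v_eq: "v = 1 - u" using uv by simp
  have comb: "u * p1 + v * p2 \<le> u * q1 + v * q2" if "p1 \<le> q1" "p2 \<le> q2" for p1 p2 q1 q2 :: real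
    using u v that by (intro add_mono mult_left_mono)
  have "u * 0 + v * 0 \<le> u * y1 + v * y2"
    and "u * y1 + v * y2 \<le> u * (m * x1) + v * (m * x2)"
    and "u * (\<alpha>1 - m * (1 - x1)) + v * (\<alpha>2 - m * (1 - x2)) \<le> u * y1 + v * y2"
    and "u * y1 + v * y2 \<le> u * \<alpha>1 + v * \<alpha>2"
    using box1 box2 unfolding big_M_box_def by (intro comb; simp)+
  then show ?thesis unfolding big_M_box_def v_eq by (simp add: algebra_simps)
qed

definition sysC2hat ::
  "(real^'m \<Rightarrow> real) \<Rightarrow> (real^'m) set \<Rightarrow> real \<Rightarrow> real \<Rightarrow> nat \<Rightarrow> (nat \<Rightarrow> real^'m) \<Rightarrow> nat
   \<Rightarrow> (nat \<Rightarrow> real^'n^'m) \<Rightarrow> (nat \<Rightarrow> real^'m) \<Rightarrow> (nat \<Rightarrow> real^'n) \<Rightarrow> (nat \<Rightarrow> real) \<Rightarrow> (nat \<Rightarrow> real)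
   \<Rightarrow> real \<Rightarrow> (nat \<Rightarrow> real) \<Rightarrow> (nat \<Rightarrow> nat \<Rightarrow> real^'m) \<Rightarrow> (nat \<Rightarrow> real) \<Rightarrow> (nat \<Rightarrow> real^'n)
   \<Rightarrow> real^'n \<Rightarrow> bool" where
  "sysC2hat nrm \<Xi> \<epsilon> \<delta> N \<zeta> T A a b h M lam s z \<alpha> y x \<longleftrightarrow>
     lam \<ge> 0 \<and> (\<forall>t\<in>{1..T}. \<alpha> t \<ge> 0) \<and> (\<forall>i\<in>{1..N}. s i \<ge> 0) \<and>
     lam * \<delta> + (1 / real N) * (\<Sum>i=1..N. s i) \<le> \<epsilon> \<and>
     (\<forall>i\<in>{1..N}. \<forall>t\<in>{1..T}. \<forall>\<xi>\<in>\<Xi>.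
        z i t \<bullet> \<xi> - fhat A a b h t (\<alpha> t) (y t) \<xi> + (1 - z i t \<bullet> \<zeta> i - s i) \<le> 0) \<and>
     (\<forall>r. \<forall>t\<in>{1..T}. big_M_box (M t) (\<alpha> t) (x $ r) (y t $ r)) \<and>
     (\<forall>i\<in>{1..N}. \<forall>t\<in>{1..T}. dual_norm nrm (z i t) \<le> lam)"

lemma ZC2hat_eq:
  "ZC2hat nrm \<Xi> \<epsilon> \<delta> N \<zeta> T A a b h M =
     {x. \<exists>lam s z \<alpha> y. sysC2hat nrm \<Xi> \<epsilon> \<delta> N \<zeta> T A a b h M lam s z \<alpha> y x}"
  unfolding ZC2hat_def sysC2hat_def big_M_box_def SUP_ereal_add_le_0_iff by blast

lemma sysC2hat_convex_combination:
  fixes nrm :: "real^'m \<Rightarrow> real"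
  assumes nrm: "is_norm nrm"
    and sys1: "sysC2hat nrm \<Xi> \<epsilon> \<delta> N \<zeta> T A a b h M lam1 s1 z1 \<alpha>1 y1 x1"
    and sys2: "sysC2hat nrm \<Xi> \<epsilon> \<delta> N \<zeta> T A a b h M lam2 s2 z2 \<alpha>2 y2 x2"
    and u: "0 \<le> u" and v: "0 \<le> v" and uv: "u + v = 1"
  shows "sysC2hat nrm \<Xi> \<epsilon> \<delta> N \<zeta> T A a b h M (u * lam1 + v * lam2) (\<lambda>i. u * s1 i + v * s2 i)
           (\<lambda>i t. u *\<^sub>R z1 i t + v *\<^sub>R z2 i t) (\<lambda>t. u * \<alpha>1 t + v * \<alpha>2 t) (\<lambda>t. u *\<^sub>R y1 t + v *\<^sub>R y2 t)
           (u *\<^sub>R x1 + v *\<^sub>R x2)"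
proof -
  have v_eq: "v = 1 - u" using uv by simp
  have budget: "(u * lam1 + v * lam2) * \<delta> + 1 / real N * (\<Sum>i=1..N. u * s1 i + v * s2 i)
      = u * (lam1 * \<delta> + 1 / real N * (\<Sum>i=1..N. s1 i))
      + v * (lam2 * \<delta> + 1 / real N * (\<Sum>i=1..N. s2 i))"
    by (simp add: sum.distrib sum_distrib_left algebra_simps)
  have sample: "(u *\<^sub>R z1 i t + v *\<^sub>R z2 i t) \<bullet> \<xi>
        - fhat A a b h t (u * \<alpha>1 t + v * \<alpha>2 t) (u *\<^sub>R y1 t + v *\<^sub>R y2 t) \<xi>
        + (1 - (u *\<^sub>R z1 i t + v *\<^sub>R z2 i t) \<bullet> \<zeta> i - (u * s1 i + v * s2 i))
      = u * (z1 i t \<bullet> \<xi> - fhat A a b h t (\<alpha>1 t) (y1 t) \<xi> + (1 - z1 i t \<bullet> \<zeta> i - s1 i))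
      + v * (z2 i t \<bullet> \<xi> - fhat A a b h t (\<alpha>2 t) (y2 t) \<xi> + (1 - z2 i t \<bullet> \<zeta> i - s2 i))" for i t \<xi>
    unfolding fhat_convex_combination v_eq by (simp add: algebra_simps inner_add_left)
  show ?thesis
    using sys1 sys2 u v uv unfolding sysC2hat_def budget sample
    by (auto intro!: convex_bound_le big_M_box_convex_combination[where m = "M _", simplified]
        dual_norm_convex_combination_le[OF nrm])
qed

lemma convex_ZC2hat:
  fixes nrm :: "real^'m \<Rightarrow> real"
  assumes "is_norm nrm"
  shows "convex (ZC2hat nrm \<Xi> \<epsilon> \<delta> N \<zeta> T A a b h M)"
  unfolding ZC2hat_eq
  by (rule convexI) (blast intro: sysC2hat_convex_combination[OF assms])

lemma sysC2hat_imp_sysC2: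
  assumes x: "\<forall>r. x $ r = 0 \<or> x $ r = 1"
    and sys: "sysC2hat nrm \<Xi> \<epsilon> \<delta> N \<zeta> T A a b h M lam s z \<alpha> y x"
  shows "sysC2 nrm \<Xi> \<epsilon> \<delta> N \<zeta> T A a b h lam s z \<alpha> x"
proof -
  have "y t $ r = (\<alpha> t *\<^sub>R x) $ r" if "t \<in> {1..T}" for t r
  proof -
    have "big_M_box (M t) (\<alpha> t) (x $ r) (y t $ r)" using sys that unfolding sysC2hat_def by blast
    with x show ?thesis by (simp add: big_M_box_binary_eq)
  qed
  then have "y t = \<alpha> t *\<^sub>R x" if "t \<in> {1..T}" for t
    using that by (simp add: vec_eq_iff)
  then show ?thesis using sys unfolding sysC2hat_def sysC2_iff by (simp add: fhat_scaleR)
qed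

lemma sysC2_imp_sysC2hat:
  assumes x: "\<forall>r. x $ r = 0 \<or> x $ r = 1"
    and sys: "sysC2 nrm \<Xi> \<epsilon> \<delta> N \<zeta> T A a b h lam s z \<alpha> x"
    and \<alpha>M: "\<forall>t\<in>{1..T}. \<alpha> t \<le> M t"
  shows "sysC2hat nrm \<Xi> \<epsilon> \<delta> N \<zeta> T A a b h M lam s z \<alpha> (\<lambda>t. \<alpha> t *\<^sub>R x) x"
proof -
  have "big_M_box (M t) (\<alpha> t) (x $ r) (\<alpha> t * x $ r)" if "t \<in> {1..T}" for r t
    using x sys \<alpha>M that unfolding sysC2_iff by (auto intro: big_M_box_binaryI)
  then show ?thesis using sys unfolding sysC2hat_def sysC2_iff by (simp add: fhat_scaleR)
qed

lemma binary_inter_ZC2hat_eq: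
  assumes S: "S \<subseteq> {x. \<forall>r. x $ r = 0 \<or> x $ r = 1}"
    and M: "\<forall>lam s z \<alpha> x. x \<in> S \<and> sysC2 nrm \<Xi> \<epsilon> \<delta> N \<zeta> T A a b h lam s z \<alpha> x
            \<longrightarrow> (\<forall>t\<in>{1..T}. \<alpha> t \<le> M t)"
  shows "S \<inter> ZC2hat nrm \<Xi> \<epsilon> \<delta> N \<zeta> T A a b h M = S \<inter> ZC2 nrm \<Xi> \<epsilon> \<delta> N \<zeta> T A a b h"
  unfolding ZC2hat_eq ZC2_def
  using S M sysC2hat_imp_sysC2 sysC2_imp_sysC2hat by fast

section \<open>Transport bounds under a coupling with the empirical distribution\<close>

lemma ennreal_le_of_INF_le:
  fixes F :: "'a \<Rightarrow> ennreal"
  assumes bound: "\<And>\<pi>. \<pi> \<in> C \<Longrightarrow> X \<le> ennreal c + ennreal lam * F \<pi>"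
    and inf: "(INF \<pi>\<in>C. F \<pi>) \<le> ennreal \<delta>"
    and c: "0 \<le> c" and lam: "0 \<le> lam" and \<delta>: "0 \<le> \<delta>"
  shows "X \<le> ennreal (c + lam * \<delta>)"
proof (rule ennreal_le_epsilon)
  fix e :: real assume e: "0 < e"
  define e' where "e' = e / (lam + 1)"
  have e': "0 < e'" "lam * e' \<le> e"
    using e lam unfolding e'_def by (auto simp: field_simps)
  have "ennreal \<delta> < ennreal (\<delta> + e')"
    using e' \<delta> by (intro ennreal_lessI) auto
  with inf have "(INF \<pi>\<in>C. F \<pi>) < ennreal (\<delta> + e')" by (rule le_less_trans)
  then obtain \<pi> where \<pi>: "\<pi> \<in> C" "F \<pi> < ennreal (\<delta> + e')" by (auto simp: INF_less_iff)
  have "ennreal lam * F \<pi> \<le> ennreal lam * ennreal (\<delta> + e')"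
    using \<pi>(2) by (intro mult_left_mono) auto
  then have "X \<le> ennreal c + ennreal lam * ennreal (\<delta> + e')"
    by (rule order_trans[OF bound[OF \<pi>(1)] add_left_mono])
  also have "\<dots> = ennreal (c + lam * (\<delta> + e'))"
    using c lam \<delta> e' by (simp add: ennreal_plus ennreal_mult)
  also have "\<dots> \<le> ennreal (c + lam * \<delta> + e)"
    using e' by (intro ennreal_leI) (simp add: algebra_simps)
  also have "\<dots> = ennreal (c + lam * \<delta>) + ennreal e"
    using c lam \<delta> e by (simp add: ennreal_plus)
  finally show "X \<le> ennreal (c + lam * \<delta>) + ennreal e" .
qed

text \<open>
  Samples may coincide, so the slack seen by the transport plan at a sample value is the least
  \<open>s\<^sub>j\<close> among the indices \<open>j\<close> carrying that value.
\<close>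

lemma finite_sample_minorant:
  fixes \<zeta> :: "'i \<Rightarrow> 'a::metric_space" and s :: "'i \<Rightarrow> real"
  assumes I: "finite I" and s: "\<forall>i\<in>I. 0 \<le> s i"
  obtains g where "g \<in> borel_measurable borel" "\<And>w. 0 \<le> g w" "\<And>i. i \<in> I \<Longrightarrow> g (\<zeta> i) \<le> s i"
    "\<And>w. w \<in> \<zeta> ` I \<Longrightarrow> \<exists>j\<in>I. \<zeta> j = w \<and> g w = s j"
proof
  define g where "g w = (if w \<in> \<zeta> ` I then Min (s ` {i\<in>I. \<zeta> i = w}) else 0)" for w
  show "g \<in> borel_measurable borel"
    by (rule measurable_discrete_difference[where f = "\<lambda>_. 0" and X = "\<zeta> ` I"])
       (auto simp: g_def I countable_finite)
  show attained: "\<exists>j\<in>I. \<zeta> j = w \<and> g w = s j" if "w \<in> \<zeta> ` I" for w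
  proof -
    have "Min (s ` {i\<in>I. \<zeta> i = w}) \<in> s ` {i\<in>I. \<zeta> i = w}"
      using that I by (intro Min_in) auto
    then show ?thesis using that unfolding g_def by auto
  qed
  show "0 \<le> g w" for w
    using attained[of w] s by (cases "w \<in> \<zeta> ` I") (auto simp: g_def)
  show "g (\<zeta> i) \<le> s i" if "i \<in> I" for i
    using that I unfolding g_def by (auto intro: Min_le)
qed

lemma coupling_measurable:
  assumes "coupling \<pi> P Q"
  shows "measurable \<pi> = measurable borel"
  using assms unfolding coupling_def by (auto intro!: measurable_cong_sets)

lemma coupling_measurable_fst_snd:
  assumes "coupling \<pi> P Q"
  shows "fst \<in> measurable \<pi> borel" "snd \<in> measurable \<pi> borel"
  unfolding coupling_measurable[OF assms]
  by (auto intro!: borel_measurable_continuous_onI continuous_intros)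

lemma AE_coupling_fst:
  assumes cp: "coupling \<pi> P Q" and ae: "AE \<xi> in P. R \<xi>"
  shows "AE p in \<pi>. R (fst p)"
proof -
  have "AE \<xi> in distr \<pi> borel fst. R \<xi>" using cp ae unfolding coupling_def by auto
  then show ?thesis by (rule AE_distrD[OF coupling_measurable_fst_snd(1)[OF cp]])
qed

lemma AE_coupling_snd:
  assumes cp: "coupling \<pi> P Q" and ae: "AE w in Q. R w"
  shows "AE p in \<pi>. R (snd p)"
proof -
  have "AE w in distr \<pi> borel snd. R w" using cp ae unfolding coupling_def by auto
  then show ?thesis by (rule AE_distrD[OF coupling_measurable_fst_snd(2)[OF cp]])
qed

lemma emeasure_le_transport_cost:
  fixes \<pi> :: "('a::euclidean_space \<times> 'a) measure"
    and g :: "'a \<Rightarrow> real" and c :: "'a \<times> 'a \<Rightarrow> real"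
  assumes cp: "coupling \<pi> P Q" and B: "B \<in> sets borel"
    and g: "g \<in> borel_measurable borel" "\<And>w. 0 \<le> g w"
    and c: "c \<in> borel_measurable borel" "\<And>p. 0 \<le> c p" and lam: "0 \<le> lam"
    and ae: "AE p in \<pi>. indicator B (fst p) \<le> g (snd p) + lam * c p"
  shows "emeasure P B \<le> (\<integral>\<^sup>+ w. g w \<partial>Q) + ennreal lam * (\<integral>\<^sup>+ p. c p \<partial>\<pi>)"
proof -
  have P: "P = distr \<pi> borel fst" and Q: "Q = distr \<pi> borel snd"
    using cp unfolding coupling_def by auto
  have [measurable]: "fst \<in> measurable \<pi> borel" "snd \<in> measurable \<pi> borel"
    "g \<in> borel_measurable borel" "c \<in> borel_measurable \<pi>"
    using g c coupling_measurable_fst_snd[OF cp] unfolding coupling_measurable[OF cp] by auto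
  have "emeasure P B = (\<integral>\<^sup>+ \<xi>. indicator B \<xi> \<partial>P)"
    using B P by simp
  also have "\<dots> = (\<integral>\<^sup>+ p. indicator B (fst p) \<partial>\<pi>)"
    unfolding P using B by (intro nn_integral_distr) auto
  also have "\<dots> \<le> (\<integral>\<^sup>+ p. ennreal (g (snd p)) + ennreal lam * ennreal (c p) \<partial>\<pi>)"
    using ae
  proof (intro nn_integral_mono_AE, eventually_elim)
    case (elim p)
    then have "ennreal (indicator B (fst p)) \<le> ennreal (g (snd p) + lam * c p)"
      by (auto intro: ennreal_leI)
    then show ?case using g c lam by (simp add: ennreal_indicator ennreal_mult)
  qed
  also have "\<dots> = (\<integral>\<^sup>+ p. g (snd p) \<partial>\<pi>) + ennreal lam * (\<integral>\<^sup>+ p. c p \<partial>\<pi>)"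
    by (simp add: nn_integral_add nn_integral_cmult)
  also have "(\<integral>\<^sup>+ p. g (snd p) \<partial>\<pi>) = (\<integral>\<^sup>+ w. g w \<partial>Q)"
    by (simp add: Q nn_integral_distr)
  finally show ?thesis .
qed

lemma nn_integral_empirical:
  assumes N: "1 \<le> N" and f: "f \<in> borel_measurable borel"
  shows "(\<integral>\<^sup>+ w. f w \<partial>empirical N \<zeta>) = (\<Sum>i=1..N. f (\<zeta> i)) / of_nat N"
proof -
  have "{1..N} \<noteq> {}" using N by simp
  then show ?thesis
    unfolding empirical_def using f by (simp add: nn_integral_distr nn_integral_pmf_of_set)
qed

lemma AE_empirical: "1 \<le> N \<Longrightarrow> AE w in empirical N \<zeta>. w \<in> \<zeta> ` {1..N}"
  unfolding empirical_def
  by (subst AE_distr_iff) (auto simp: AE_measure_pmf_iff finite_imp_closed)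

section \<open>Inner approximation of the distributionally robust chance constraint\<close>

abbreviation safe_set ::
  "nat \<Rightarrow> (nat \<Rightarrow> real^'n^'m) \<Rightarrow> (nat \<Rightarrow> real^'m) \<Rightarrow> (nat \<Rightarrow> real^'n) \<Rightarrow> (nat \<Rightarrow> real)
   \<Rightarrow> real^'n \<Rightarrow> (real^'m) set" where
  "safe_set T A a b h x \<equiv> {\<xi>. \<forall>t\<in>{1..T}. fval A a b h t x \<xi> \<ge> 0}"

lemma closed_safe_set: "closed (safe_set T A a b h x)"
proof -
  have "safe_set T A a b h x = (\<Inter>t\<in>{1..T}. {\<xi>. fval A a b h t x \<xi> \<ge> 0})" by auto
  then show ?thesis
    unfolding fval_def by (auto intro!: closed_INT closed_Collect_le continuous_intros)
qed

lemma indicator_unsafe_le: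
  fixes nrm :: "real^'m \<Rightarrow> real"
  assumes nrm: "is_norm nrm"
    and sys: "sysC2 nrm \<Xi> \<epsilon> \<delta> N \<zeta> T A a b h lam s z \<alpha> x"
    and j: "j \<in> {1..N}" and \<xi>: "\<xi> \<in> \<Xi>"
  shows "indicator (- safe_set T A a b h x) \<xi> \<le> s j + lam * nrm (\<xi> - \<zeta> j)"
proof (cases "\<xi> \<in> safe_set T A a b h x")
  case True
  then show ?thesis
    using sys j is_norm_nonneg[OF nrm] unfolding sysC2_iff by simp
next
  case False
  then obtain t where t: "t \<in> {1..T}" and neg: "fval A a b h t x \<xi> < 0" by auto
  have "z j t \<bullet> \<xi> - \<alpha> t * fval A a b h t x \<xi> + (1 - z j t \<bullet> \<zeta> j - s j) \<le> 0"
    and "0 \<le> \<alpha> t" and dual: "dual_norm nrm (z j t) \<le> lam"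
    using sys t j \<xi> unfolding sysC2_iff by auto
  moreover from \<open>0 \<le> \<alpha> t\<close> neg have "\<alpha> t * fval A a b h t x \<xi> \<le> 0"
    by (simp add: mult_nonneg_nonpos)
  ultimately have "1 \<le> s j + z j t \<bullet> (\<zeta> j - \<xi>)" by (simp add: inner_diff_right)
  also have "z j t \<bullet> (\<zeta> j - \<xi>) \<le> lam * nrm (\<xi> - \<zeta> j)"
    using inner_le_dual_norm_mult[OF nrm dual] is_norm_minus_commute[OF nrm] by metis
  finally show ?thesis using False by simp
qed

lemma emeasure_unsafe_le_transport_cost:
  fixes nrm :: "real^'m \<Rightarrow> real" and \<pi> :: "((real^'m) \<times> (real^'m)) measure"
  assumes nrm: "is_norm nrm" and N: "1 \<le> N"
    and sys: "sysC2 nrm \<Xi> \<epsilon> \<delta> N \<zeta> T A a b h lam s z \<alpha> x"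
    and P: "prob_space P" "measure P \<Xi> = 1"
    and cp: "coupling \<pi> P (empirical N \<zeta>)"
  shows "emeasure P (- safe_set T A a b h x)
           \<le> ennreal ((\<Sum>i=1..N. s i) / N) + ennreal lam * (\<integral>\<^sup>+ p. nrm (fst p - snd p) \<partial>\<pi>)"
proof -
  have s: "\<forall>i\<in>{1..N}. 0 \<le> s i" and lam: "0 \<le> lam" using sys unfolding sysC2_iff by auto
  obtain g where g: "g \<in> borel_measurable borel" "\<And>w. 0 \<le> g w" "\<And>i. i \<in> {1..N} \<Longrightarrow> g (\<zeta> i) \<le> s i"
    and g_attained: "\<And>w. w \<in> \<zeta> ` {1..N} \<Longrightarrow> \<exists>j\<in>{1..N}. \<zeta> j = w \<and> g w = s j"
    using finite_sample_minorant[of "{1..N}" s \<zeta>] s by auto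
  have "AE p in \<pi>. fst p \<in> \<Xi> \<and> snd p \<in> \<zeta> ` {1..N}"
    using AE_coupling_fst[OF cp prob_space.AE_prob_1[OF P]] AE_coupling_snd[OF cp AE_empirical[OF N]]
    by eventually_elim simp
  then have "AE p in \<pi>. indicator (- safe_set T A a b h x) (fst p) \<le> g (snd p) + lam * nrm (fst p - snd p)"
  proof eventually_elim
    case (elim p)
    then obtain j where "j \<in> {1..N}" "\<zeta> j = snd p" "g (snd p) = s j" using g_attained by blast
    with indicator_unsafe_le[OF nrm sys, of j "fst p"] elim show ?case by simp
  qed
  then have bound: "emeasure P (- safe_set T A a b h x)
      \<le> (\<integral>\<^sup>+ w. g w \<partial>empirical N \<zeta>) + ennreal lam * (\<integral>\<^sup>+ p. nrm (fst p - snd p) \<partial>\<pi>)"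
    using g lam is_norm_nonneg[OF nrm] borel_open[OF open_Compl[OF closed_safe_set]]
    by (intro emeasure_le_transport_cost[OF cp])
       (auto intro!: borel_measurable_continuous_onI continuous_on_compose2[OF is_norm_continuous_on[OF nrm]]
         continuous_intros)
  have "(\<integral>\<^sup>+ w. g w \<partial>empirical N \<zeta>) = ennreal ((\<Sum>i=1..N. g (\<zeta> i)) / N)"
    using g N by (simp add: nn_integral_empirical ennreal_of_nat_eq_real_of_nat sum_nonneg divide_ennreal)
  also have "\<dots> \<le> ennreal ((\<Sum>i=1..N. s i) / N)"
    using g by (intro ennreal_leI divide_right_mono sum_mono) auto
  finally show ?thesis using bound by (meson add_right_mono order.trans)
qed

lemma measure_safe_set_ge:
  fixes nrm :: "real^'m \<Rightarrow> real"
  assumes nrm: "is_norm nrm" and N: "1 \<le> N" and \<delta>: "0 \<le> \<delta>"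
    and sys: "sysC2 nrm \<Xi> \<epsilon> \<delta> N \<zeta> T A a b h lam s z \<alpha> x"
    and P: "P \<in> PW nrm \<Xi> \<delta> N \<zeta>"
  shows "1 - \<epsilon> \<le> measure P (safe_set T A a b h x)"
proof -
  have prob: "prob_space P" and sets: "sets P = sets borel" and P\<Xi>: "measure P \<Xi> = 1"
    and W: "(INF \<pi>\<in>{\<pi>. coupling \<pi> P (empirical N \<zeta>)}. \<integral>\<^sup>+ p. nrm (fst p - snd p) \<partial>\<pi>) \<le> ennreal \<delta>"
    using P unfolding PW_def wasserstein_def by auto
  have s: "0 \<le> (\<Sum>i=1..N. s i) / N" and lam: "0 \<le> lam"
    and budget: "lam * \<delta> + (1 / real N) * (\<Sum>i=1..N. s i) \<le> \<epsilon>"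
    using sys unfolding sysC2_iff by (auto intro!: divide_nonneg_nonneg sum_nonneg)
  have "ennreal (measure P (- safe_set T A a b h x)) = emeasure P (- safe_set T A a b h x)"
    by (rule finite_measure.emeasure_eq_measure[OF prob_space.axioms(1)[OF prob], symmetric])
  also have "\<dots> \<le> ennreal ((\<Sum>i=1..N. s i) / N + lam * \<delta>)"
    using emeasure_unsafe_le_transport_cost[OF nrm N sys prob P\<Xi>] s lam \<delta>
    by (intro ennreal_le_of_INF_le[OF _ W]) auto
  finally have "measure P (- safe_set T A a b h x) \<le> (\<Sum>i=1..N. s i) / N + lam * \<delta>"
    using s lam \<delta> by (simp only: ennreal_le_iff[OF add_nonneg_nonneg[OF s mult_nonneg_nonneg[OF lam \<delta>]]])
  then have "measure P (- safe_set T A a b h x) \<le> \<epsilon>" using budget by simp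
  moreover have "measure P (- safe_set T A a b h x) = 1 - measure P (safe_set T A a b h x)"
  proof -
    have "safe_set T A a b h x \<in> sets P" unfolding sets by (rule borel_closed[OF closed_safe_set])
    then show ?thesis
      using prob_space.prob_compl[OF prob] by (simp add: Compl_eq_Diff_UNIV sets_eq_imp_space_eq[OF sets])
  qed
  ultimately show ?thesis by simp
qed

lemma ZC2_subset_ZD:
  fixes nrm :: "real^'m \<Rightarrow> real"
  assumes "is_norm nrm" "1 \<le> N" "0 \<le> \<delta>"
  shows "ZC2 nrm \<Xi> \<epsilon> \<delta> N \<zeta> T A a b h \<subseteq> ZD nrm \<Xi> \<epsilon> \<delta> N \<zeta> T A a b h"
  unfolding ZC2_def ZD_def
  using measure_safe_set_ge[OF assms] by (auto intro!: INF_greatest)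

theorem theorem3:
  fixes nrm :: "real^'m \<Rightarrow> real"
    and \<Xi> :: "(real^'m) set"
    and \<epsilon> \<delta> :: real
    and N T :: nat
    and \<zeta> :: "nat \<Rightarrow> real^'m"
    and A :: "nat \<Rightarrow> real^'n^'m" and a :: "nat \<Rightarrow> real^'m"
    and b :: "nat \<Rightarrow> real^'n" and h :: "nat \<Rightarrow> real"
    and S :: "(real^'n) set"
    and M :: "nat \<Rightarrow> real"
  assumes "0 < \<epsilon>" and "\<epsilon> < 1" and "0 < \<delta>"
    and "is_norm nrm"
    and "\<Xi> \<noteq> {}" and "closed \<Xi>" and "convex \<Xi>"
    and "N \<ge> 1" and "\<forall>i\<in>{1..N}. \<zeta> i \<in> \<Xi>"
    and "S \<subseteq> {x. \<forall>r. x $ r = 0 \<or> x $ r = 1}"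
    and "\<forall>lam s z \<alpha> x. x \<in> S \<and> sysC2 nrm \<Xi> \<epsilon> \<delta> N \<zeta> T A a b h lam s z \<alpha> x
            \<longrightarrow> (\<forall>t\<in>{1..T}. \<alpha> t \<le> M t)"
  shows "convex (ZC2hat nrm \<Xi> \<epsilon> \<delta> N \<zeta> T A a b h M) \<and>
         S \<inter> ZC2hat nrm \<Xi> \<epsilon> \<delta> N \<zeta> T A a b h M = S \<inter> ZC2 nrm \<Xi> \<epsilon> \<delta> N \<zeta> T A a b h \<and>
         S \<inter> ZC2 nrm \<Xi> \<epsilon> \<delta> N \<zeta> T A a b h \<subseteq> S \<inter> ZD nrm \<Xi> \<epsilon> \<delta> N \<zeta> T A a b h"
proof (intro conjI)
  show "convex (ZC2hat nrm \<Xi> \<epsilon> \<delta> N \<zeta> T A a b h M)"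
    using convex_ZC2hat[OF assms(4)] .
  show "S \<inter> ZC2hat nrm \<Xi> \<epsilon> \<delta> N \<zeta> T A a b h M = S \<inter> ZC2 nrm \<Xi> \<epsilon> \<delta> N \<zeta> T A a b h"
    using binary_inter_ZC2hat_eq[OF assms(10,11)] .
  have "ZC2 nrm \<Xi> \<epsilon> \<delta> N \<zeta> T A a b h \<subseteq> ZD nrm \<Xi> \<epsilon> \<delta> N \<zeta> T A a b h"
    using ZC2_subset_ZD[OF assms(4,8) less_imp_le[OF assms(3)]] .
  then show "S \<inter> ZC2 nrm \<Xi> \<epsilon> \<delta> N \<zeta> T A a b h \<subseteq> S \<inter> ZD nrm \<Xi> \<epsilon> \<delta> N \<zeta> T A a b h"
    by blast
qed

end
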